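(* Let $\mathcal H$ be an infinite-dimensional complex Hilbert space. Then the generalized effect algebra $(\mathcal V_f(\mathcal H);\oplus,o)$ is monotone Dedekind downwards $\sigma$-complete.
   Context: Bilinear forms $t$ on $\mathcal H$ are sesquilinear maps $D(t)\times D(t)\to\mathbb C$ on a dense linear subspace $D(t)$ (linear in the first argument); $t$ is positive if $t(x,x)\ge0$ on $D(t)$, bounded if $\sup\{t(x,x)\mid x\in D(t),\|x\|=1\}<\infty$. The sum $t+s$ has domain $D(t)\cap D(s)$. $o$ is the zero form on $\mathcal H$. $\mathcal V_f(\mathcal H)$ is the set of positive bilinear forms with dense domain such that $D(t)=\mathcal H$ whenever $t$ is bounded; $t\oplus s$ is defined iff $t$ or $s$ is bounded or $D(t)=D(s)$, and then $t\oplus s=t+s$; this is a generalized effect algebra with induced order $t\le s$ iff $t\oplus r=s$ for some $r\in\mathcal V_f(\mathcal H)$. A generalized effect algebra is monotone Dedekind downwards $\sigma$-complete if every sequence $x_1\ge x_2\ge\cdots$ (in the induced order) has an infimum in it. *)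

theory Defs
  imports "HOL-Analysis.Analysis"
begin

class complex_vector = real_vector +
  fixes scaleC :: "complex \<Rightarrow> 'a \<Rightarrow> 'a" (infixr "*\<^sub>C" 75)
  assumes scaleC_add_right: "a *\<^sub>C (x + y) = a *\<^sub>C x + a *\<^sub>C y"
    and scaleC_add_left: "(a + b) *\<^sub>C x = a *\<^sub>C x + b *\<^sub>C x"
    and scaleC_scaleC: "a *\<^sub>C (b *\<^sub>C x) = (a * b) *\<^sub>C x"
    and scaleC_one: "1 *\<^sub>C x = x"
    and scaleR_scaleC: "scaleR r x = complex_of_real r *\<^sub>C x"

class complex_inner = complex_vector + real_normed_vector +
  fixes cinner :: "'a \<Rightarrow> 'a \<Rightarrow> complex"
  assumes cinner_conj: "cinner x y = cnj (cinner y x)"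
    and cinner_add_left: "cinner (x + y) z = cinner x z + cinner y z"
    and cinner_scaleC_left: "cinner (a *\<^sub>C x) y = a * cinner x y"
    and cinner_self_nonneg: "0 \<le> Re (cinner x x)"
    and cinner_self_eq_zero: "cinner x x = 0 \<longleftrightarrow> x = 0"
    and norm_eq_sqrt_cinner: "norm x = sqrt (Re (cinner x x))"

class chilbert_space = complex_inner + complete_space

definition cspan :: "'a::complex_vector set \<Rightarrow> 'a set" where
  "cspan S = {(\<Sum>x\<in>F. c x *\<^sub>C x) | F c. finite F \<and> F \<subseteq> S}"

definition infinite_dimensional :: "'a::complex_vector itself \<Rightarrow> bool" where
  "infinite_dimensional _ \<longleftrightarrow> (\<forall>S::'a set. finite S \<longrightarrow> cspan S \<noteq> UNIV)"

definition csubspace :: "'a::complex_vector set \<Rightarrow> bool" where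
  "csubspace D \<longleftrightarrow> 0 \<in> D \<and> (\<forall>x\<in>D. \<forall>y\<in>D. x + y \<in> D) \<and> (\<forall>c. \<forall>x\<in>D. c *\<^sub>C x \<in> D)"

text \<open>A form is a pair (domain, values); values outside the domain are normalised
  to 0, so that equality of forms is HOL equality.\<close>
type_synonym 'a form = "'a set \<times> ('a \<Rightarrow> 'a \<Rightarrow> complex)"

definition fdom :: "'a form \<Rightarrow> 'a set" where "fdom t = fst t"
definition fval :: "'a form \<Rightarrow> 'a \<Rightarrow> 'a \<Rightarrow> complex" where "fval t = snd t"

definition is_form :: "'a::complex_inner form \<Rightarrow> bool" where
  "is_form t \<longleftrightarrow> csubspace (fdom t) \<and> closure (fdom t) = UNIV \<and>
     (\<forall>x\<in>fdom t. \<forall>x'\<in>fdom t. \<forall>y\<in>fdom t. fval t (x + x') y = fval t x y + fval t x' y) \<and>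
     (\<forall>c. \<forall>x\<in>fdom t. \<forall>y\<in>fdom t. fval t (c *\<^sub>C x) y = c * fval t x y) \<and>
     (\<forall>x\<in>fdom t. \<forall>y\<in>fdom t. \<forall>y'\<in>fdom t. fval t x (y + y') = fval t x y + fval t x y') \<and>
     (\<forall>c. \<forall>x\<in>fdom t. \<forall>y\<in>fdom t. fval t x (c *\<^sub>C y) = cnj c * fval t x y) \<and>
     (\<forall>x y. x \<notin> fdom t \<or> y \<notin> fdom t \<longrightarrow> fval t x y = 0)"

definition form_positive :: "'a::complex_inner form \<Rightarrow> bool" where
  "form_positive t \<longleftrightarrow> (\<forall>x\<in>fdom t. Im (fval t x x) = 0 \<and> 0 \<le> Re (fval t x x))"

definition form_bounded :: "'a::complex_inner form \<Rightarrow> bool" where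
  "form_bounded t \<longleftrightarrow> bdd_above {Re (fval t x x) | x. x \<in> fdom t \<and> norm x = 1}"

definition form_plus :: "'a form \<Rightarrow> 'a form \<Rightarrow> 'a form" where
  "form_plus t s = (fdom t \<inter> fdom s,
     \<lambda>x y. if x \<in> fdom t \<inter> fdom s \<and> y \<in> fdom t \<inter> fdom s
           then fval t x y + fval s x y else 0)"

definition zero_form :: "'a form" where
  "zero_form = (UNIV, \<lambda>x y. 0)"

definition Vf :: "'a::complex_inner form set" where
  "Vf = {t. is_form t \<and> form_positive t \<and> (form_bounded t \<longrightarrow> fdom t = UNIV)}"

definition oplus_defined :: "'a::complex_inner form \<Rightarrow> 'a form \<Rightarrow> bool" where
  "oplus_defined t s \<longleftrightarrow> form_bounded t \<or> form_bounded s \<or> fdom t = fdom s"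

text \<open>Induced order of the generalized effect algebra (Vf; oplus, zero_form).\<close>
definition Vf_le :: "'a::complex_inner form \<Rightarrow> 'a form \<Rightarrow> bool" where
  "Vf_le t s \<longleftrightarrow> (\<exists>r\<in>Vf. oplus_defined t r \<and> form_plus t r = s)"

definition monotone_dedekind_down_sigma_complete :: "'a set \<Rightarrow> ('a \<Rightarrow> 'a \<Rightarrow> bool) \<Rightarrow> bool" where
  "monotone_dedekind_down_sigma_complete E le \<longleftrightarrow>
     (\<forall>x::nat \<Rightarrow> 'a. (\<forall>n. x n \<in> E) \<and> (\<forall>n. le (x (Suc n)) (x n)) \<longrightarrow>
        (\<exists>y\<in>E. (\<forall>n. le y (x n)) \<and> (\<forall>z\<in>E. (\<forall>n. le z (x n)) \<longrightarrow> le z y)))"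

end

theory Submission
  imports Defs
begin

text \<open>Let \<open>x\<^sub>1 \<ge> x\<^sub>2 \<ge> \<dots>\<close> in \<open>Vf\<close>. Being below \<open>x\<^sub>n\<close> means having a larger
  domain and smaller quadratic values, so the domains increase; they can only change at a
  step where the smaller form is bounded, and then its domain is the whole space. Hence the
  domains stabilise to a dense subspace \<open>D\<close>. On \<open>D\<close> the values \<open>x\<^sub>n(v,v)\<close> eventually
  decrease and are nonnegative, so they converge, and by polarization \<open>x\<^sub>n(u,v)\<close> converges
  to a positive form \<open>L\<close> on \<open>D\<close>. If \<open>L\<close> is unbounded it lies in \<open>Vf\<close>; if it is bounded,
  its continuous extension to the whole space does. This form is the infimum: any lower bound is
  pointwise below \<open>L\<close> on \<open>D\<close>, and below its extension by density and continuity.\<close>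

lemma cinner_scaleC_right: "cinner x (c *\<^sub>C y) = cnj c * cinner x y"
  by (metis cinner_conj cinner_scaleC_left complex_cnj_mult)

lemma norm_scaleC: "norm (c *\<^sub>C x) = cmod c * norm (x::'a::complex_inner)"
proof -
  have "cinner (c *\<^sub>C x) (c *\<^sub>C x) = (c * cnj c) * cinner x x"
    by (simp add: cinner_scaleC_left cinner_scaleC_right)
  also have "c * cnj c = complex_of_real ((cmod c)\<^sup>2)"
    by (metis complex_norm_square)
  finally show ?thesis
    by (simp add: norm_eq_sqrt_cinner real_sqrt_mult)
qed

lemma scaleC_diff_right: "c *\<^sub>C (x - y) = c *\<^sub>C x - c *\<^sub>C (y::'a::complex_vector)"
  by (metis eq_diff_eq scaleC_add_right)

lemma tendsto_scaleC:
  fixes a :: "nat \<Rightarrow> 'a::complex_inner"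
  assumes "a \<longlonglongrightarrow> u"
  shows "(\<lambda>n. c *\<^sub>C a n) \<longlonglongrightarrow> c *\<^sub>C u"
proof -
  have "(\<lambda>n. cmod c * norm (a n - u)) \<longlonglongrightarrow> 0"
    using assms tendsto_mult_right_zero tendsto_norm_zero LIM_zero by blast
  then have "(\<lambda>n. norm (c *\<^sub>C a n - c *\<^sub>C u)) \<longlonglongrightarrow> 0"
    by (simp add: norm_scaleC flip: scaleC_diff_right)
  then have "(\<lambda>n. c *\<^sub>C a n - c *\<^sub>C u) \<longlonglongrightarrow> 0"
    by (simp add: tendsto_norm_zero_iff)
  then show ?thesis
    by (simp add: LIM_zero_iff)
qed

section \<open>Sesquilinear forms\<close>

lemma form_dom:
  assumes "is_form t"
  shows form_dom_zero: "0 \<in> fdom t"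
    and form_dom_add: "x \<in> fdom t \<Longrightarrow> y \<in> fdom t \<Longrightarrow> x + y \<in> fdom t"
    and form_dom_scaleC: "x \<in> fdom t \<Longrightarrow> c *\<^sub>C x \<in> fdom t"
    and form_dom_scaleR: "x \<in> fdom t \<Longrightarrow> r *\<^sub>R x \<in> fdom t"
    and form_dom_diff: "x \<in> fdom t \<Longrightarrow> y \<in> fdom t \<Longrightarrow> x - y \<in> fdom t"
  using assms unfolding is_form_def csubspace_def
  by (auto simp: scaleR_scaleC)
    (metis diff_conv_add_uminus scaleR_minus1_left scaleR_scaleC)

lemma form_out: "is_form t \<Longrightarrow> x \<notin> fdom t \<or> y \<notin> fdom t \<Longrightarrow> fval t x y = 0"
  unfolding is_form_def by auto

lemma form_dense: "is_form t \<Longrightarrow> closure (fdom t) = UNIV"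
  unfolding is_form_def by auto

definition form_of :: "'a set \<Rightarrow> ('a \<Rightarrow> 'a \<Rightarrow> complex) \<Rightarrow> 'a form" where
  "form_of D f = (D, \<lambda>x y. if x \<in> D \<and> y \<in> D then f x y else 0)"

lemma fdom_form_of [simp]: "fdom (form_of D f) = D"
  and fval_form_of: "fval (form_of D f) x y = (if x \<in> D \<and> y \<in> D then f x y else 0)"
  by (simp_all add: form_of_def fdom_def fval_def)

lemma is_form_form_of:
  assumes "csubspace D" "closure D = UNIV"
    and "\<And>x x' y. x \<in> D \<Longrightarrow> x' \<in> D \<Longrightarrow> y \<in> D \<Longrightarrow> f (x + x') y = f x y + f x' y"
    and "\<And>c x y. x \<in> D \<Longrightarrow> y \<in> D \<Longrightarrow> f (c *\<^sub>C x) y = c * f x y"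
    and "\<And>x y y'. x \<in> D \<Longrightarrow> y \<in> D \<Longrightarrow> y' \<in> D \<Longrightarrow> f x (y + y') = f x y + f x y'"
    and "\<And>c x y. x \<in> D \<Longrightarrow> y \<in> D \<Longrightarrow> f x (c *\<^sub>C y) = cnj c * f x y"
  shows "is_form (form_of D f)"
  using assms unfolding is_form_def csubspace_def by (simp add: fval_form_of)

lemma form_of_cong:
  "(\<And>x y. x \<in> D \<Longrightarrow> y \<in> D \<Longrightarrow> f x y = g x y) \<Longrightarrow> form_of D f = form_of D g"
  unfolding form_of_def by (simp add: fun_eq_iff)

lemma form_plus_form_of: "form_plus t s = form_of (fdom t \<inter> fdom s) (\<lambda>x y. fval t x y + fval s x y)"
  unfolding form_plus_def form_of_def by simp

lemma form_of_fval:
  assumes "is_form t"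
  shows "form_of (fdom t) (fval t) = t"
proof -
  have "fval (form_of (fdom t) (fval t)) x y = fval t x y" for x y
    using form_out[OF assms] by (auto simp: fval_form_of)
  then show ?thesis
    by (metis ext fdom_form_of fdom_def fval_def prod.collapse)
qed

context
  fixes t :: "'a::complex_inner form"
  assumes t: "is_form t"
begin

lemma form_add_left: "x \<in> fdom t \<Longrightarrow> x' \<in> fdom t \<Longrightarrow> y \<in> fdom t \<Longrightarrow>
    fval t (x + x') y = fval t x y + fval t x' y"
  and form_scaleC_left: "x \<in> fdom t \<Longrightarrow> y \<in> fdom t \<Longrightarrow> fval t (c *\<^sub>C x) y = c * fval t x y"
  and form_add_right: "x \<in> fdom t \<Longrightarrow> y \<in> fdom t \<Longrightarrow> y' \<in> fdom t \<Longrightarrow>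
    fval t x (y + y') = fval t x y + fval t x y'"
  and form_scaleC_right: "x \<in> fdom t \<Longrightarrow> y \<in> fdom t \<Longrightarrow> fval t x (c *\<^sub>C y) = cnj c * fval t x y"
  using t unfolding is_form_def by auto

lemma form_diff_left: "x \<in> fdom t \<Longrightarrow> x' \<in> fdom t \<Longrightarrow> y \<in> fdom t \<Longrightarrow>
    fval t (x - x') y = fval t x y - fval t x' y"
  by (metis eq_diff_eq form_add_left form_dom_diff t)

lemma form_diff_right: "x \<in> fdom t \<Longrightarrow> y \<in> fdom t \<Longrightarrow> y' \<in> fdom t \<Longrightarrow>
    fval t x (y - y') = fval t x y - fval t x y'"
  by (metis eq_diff_eq form_add_right form_dom_diff t)

lemma form_scaleR_left: "x \<in> fdom t \<Longrightarrow> y \<in> fdom t \<Longrightarrow> fval t (r *\<^sub>R x) y = of_real r * fval t x y"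
  and form_scaleR_right: "x \<in> fdom t \<Longrightarrow> y \<in> fdom t \<Longrightarrow> fval t x (r *\<^sub>R y) = of_real r * fval t x y"
  by (simp_all add: scaleR_scaleC form_scaleC_left form_scaleC_right)

lemma form_zero_left: "y \<in> fdom t \<Longrightarrow> fval t 0 y = 0"
  and form_zero_right: "y \<in> fdom t \<Longrightarrow> fval t y 0 = 0"
  using form_diff_left[of 0 0 y] form_diff_right[of y 0 0] form_dom_zero[OF t] by auto

lemma form_expand:
  assumes "a \<in> fdom t" "b \<in> fdom t"
  shows "fval t (a + c *\<^sub>C b) (a + c *\<^sub>C b) =
    fval t a a + cnj c * fval t a b + c * fval t b a + c * cnj c * fval t b b"
  using assms form_dom_add[OF t] form_dom_scaleC[OF t]
  by (simp add: form_add_left form_add_right form_scaleC_left form_scaleC_right algebra_simps)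

lemma form_polarization:
  assumes "a \<in> fdom t" "b \<in> fdom t"
  shows "4 * fval t a b = fval t (a + 1 *\<^sub>C b) (a + 1 *\<^sub>C b) - fval t (a + (-1) *\<^sub>C b) (a + (-1) *\<^sub>C b)
     + \<i> * fval t (a + \<i> *\<^sub>C b) (a + \<i> *\<^sub>C b) - \<i> * fval t (a + (-\<i>) *\<^sub>C b) (a + (-\<i>) *\<^sub>C b)"
  unfolding form_expand[OF assms] by (simp add: algebra_simps)

end

lemma form_positive_real:
  assumes "form_positive t" "x \<in> fdom t"
  shows "of_real (Re (fval t x x)) = fval t x x"
    and "cmod (fval t x x) = Re (fval t x x)"
    and "0 \<le> Re (fval t x x)"
  using assms unfolding form_positive_def by (auto simp: complex_eq_iff cmod_eq_Re)

section \<open>Bounded positive forms and their continuous extension\<close>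

lemma form_bounded_iff:
  assumes "is_form t"
  shows "form_bounded t \<longleftrightarrow> (\<exists>M\<ge>0. \<forall>w\<in>fdom t. Re (fval t w w) \<le> M * (norm w)\<^sup>2)"
proof
  assume "form_bounded t"
  then obtain B where B: "\<And>x. x \<in> fdom t \<Longrightarrow> norm x = 1 \<Longrightarrow> Re (fval t x x) \<le> B"
    unfolding form_bounded_def bdd_above_def by blast
  have "Re (fval t w w) \<le> max B 0 * (norm w)\<^sup>2" if w: "w \<in> fdom t" for w
  proof (cases "w = 0")
    case True
    then show ?thesis
      using form_zero_left[OF assms w] by simp
  next
    case False
    define n where "n = norm w"
    have n: "n > 0"
      using False by (simp add: n_def)
    have "(1/n) * (1/n) * Re (fval t w w) = Re (fval t ((1/n) *\<^sub>R w) ((1/n) *\<^sub>R w))"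
      using w form_dom_scaleR[OF assms] by (simp add: form_scaleR_left form_scaleR_right assms)
    also have "\<dots> \<le> B"
      using n w by (intro B form_dom_scaleR[OF assms]) (simp_all add: n_def)
    finally have "Re (fval t w w) \<le> B * n\<^sup>2"
      using n by (simp add: field_simps power2_eq_square)
    also have "\<dots> \<le> max B 0 * n\<^sup>2"
      by (simp add: mult_right_mono)
    finally show ?thesis
      by (simp add: n_def)
  qed
  then show "\<exists>M\<ge>0. \<forall>w\<in>fdom t. Re (fval t w w) \<le> M * (norm w)\<^sup>2"
    by (intro exI[of _ "max B 0"]) auto
next
  assume "\<exists>M\<ge>0. \<forall>w\<in>fdom t. Re (fval t w w) \<le> M * (norm w)\<^sup>2"
  then show "form_bounded t"
    unfolding form_bounded_def bdd_above_def by force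
qed

lemma cmod_diff_add_i_diff_le: "cmod (A - B + \<i> * C - \<i> * D) \<le> cmod A + cmod B + cmod C + cmod D"
proof -
  have "cmod (A - B + \<i> * C - \<i> * D) \<le> cmod (A - B) + cmod (\<i> * C) + cmod (\<i> * D)"
    by (metis add_right_mono norm_triangle_ineq norm_triangle_ineq4 order_trans)
  also have "\<dots> \<le> cmod A + cmod B + cmod C + cmod D"
    using norm_triangle_ineq4[of A B] by (simp add: norm_mult)
  finally show ?thesis .
qed

context
  fixes t :: "'a::complex_inner form" and M :: real
  assumes t: "is_form t" "form_positive t"
    and M: "M \<ge> 0" "\<forall>w\<in>fdom t. Re (fval t w w) \<le> M * (norm w)\<^sup>2"
begin

lemma form_cmod_le_norm_add:
  assumes "a \<in> fdom t" "b \<in> fdom t"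
  shows "cmod (fval t a b) \<le> M * (norm a + norm b)\<^sup>2"
proof -
  have diag: "cmod (fval t (a + c *\<^sub>C b) (a + c *\<^sub>C b)) \<le> M * (norm a + norm b)\<^sup>2"
    if "cmod c = 1" for c
  proof -
    have w: "a + c *\<^sub>C b \<in> fdom t"
      using assms form_dom_add[OF t(1)] form_dom_scaleC[OF t(1)] by blast
    have "cmod (fval t (a + c *\<^sub>C b) (a + c *\<^sub>C b)) = Re (fval t (a + c *\<^sub>C b) (a + c *\<^sub>C b))"
      using form_positive_real(2)[OF t(2) w] .
    also have "\<dots> \<le> M * (norm (a + c *\<^sub>C b))\<^sup>2"
      using M(2) w by blast
    also have "\<dots> \<le> M * (norm a + norm b)\<^sup>2"
      using norm_triangle_ineq[of a "c *\<^sub>C b"] M(1) that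
      by (intro mult_left_mono power_mono) (simp_all add: norm_scaleC)
    finally show ?thesis .
  qed
  have "4 * cmod (fval t a b) = cmod (4 * fval t a b)"
    by (simp add: norm_mult)
  also have "\<dots> \<le> cmod (fval t (a + 1 *\<^sub>C b) (a + 1 *\<^sub>C b)) + cmod (fval t (a + (-1) *\<^sub>C b) (a + (-1) *\<^sub>C b))
     + cmod (fval t (a + \<i> *\<^sub>C b) (a + \<i> *\<^sub>C b)) + cmod (fval t (a + (-\<i>) *\<^sub>C b) (a + (-\<i>) *\<^sub>C b))"
    unfolding form_polarization[OF t(1) assms] by (rule cmod_diff_add_i_diff_le)
  also have "\<dots> \<le> 4 * (M * (norm a + norm b)\<^sup>2)"
    using diag[of 1] diag[of "-1"] diag[of \<i>] diag[of "-\<i>"] by simp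
  finally show ?thesis
    by simp
qed

text \<open>Rescaling \<open>a\<close> and \<open>b\<close> to equal norms turns the previous bound into a
  Cauchy--Schwarz type estimate.\<close>
lemma form_cmod_le_norm_mult:
  assumes "a \<in> fdom t" "b \<in> fdom t"
  shows "cmod (fval t a b) \<le> 4 * M * norm a * norm b"
proof (cases "a = 0 \<or> b = 0")
  case True
  then show ?thesis
    using form_zero_left[OF t(1)] form_zero_right[OF t(1)] assms by auto
next
  case False
  define s where "s = sqrt (norm b / norm a)"
  have s: "s > 0" "s\<^sup>2 = norm b / norm a"
    using False by (simp_all add: s_def)
  have "fval t a b = fval t (s *\<^sub>R a) ((1/s) *\<^sub>R b)"
    using assms s(1) by (simp add: form_scaleR_left form_scaleR_right form_dom_scaleR t(1))
  also have "cmod \<dots> \<le> M * (norm (s *\<^sub>R a) + norm ((1/s) *\<^sub>R b))\<^sup>2"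
    using assms by (intro form_cmod_le_norm_add form_dom_scaleR[OF t(1)])
  also have "(norm (s *\<^sub>R a) + norm ((1/s) *\<^sub>R b))\<^sup>2 = s\<^sup>2 * (norm a)\<^sup>2 + (norm b)\<^sup>2 / s\<^sup>2 + 2 * norm a * norm b"
    using s(1) by (simp add: power2_sum field_simps power2_eq_square)
  also have "\<dots> = 4 * norm a * norm b"
    unfolding s(2) using False by (simp add: field_simps power2_eq_square)
  finally show ?thesis
    by (simp add: mult.assoc)
qed

lemma form_cmod_diff_le:
  assumes "a \<in> fdom t" "b \<in> fdom t" "a' \<in> fdom t" "b' \<in> fdom t"
  shows "cmod (fval t a b - fval t a' b') \<le> 4 * M * (norm (a - a') * norm b + norm a' * norm (b - b'))"
proof -
  have "fval t a b - fval t a' b' = fval t (a - a') b + fval t a' (b - b')"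
    using assms by (simp add: form_diff_left form_diff_right t(1))
  then have "cmod (fval t a b - fval t a' b') \<le> cmod (fval t (a - a') b) + cmod (fval t a' (b - b'))"
    by (simp add: norm_triangle_ineq)
  also have "\<dots> \<le> 4 * M * norm (a - a') * norm b + 4 * M * norm a' * norm (b - b')"
    using assms form_dom_diff[OF t(1)] by (intro add_mono form_cmod_le_norm_mult)
  finally show ?thesis
    by (simp add: algebra_simps)
qed

lemma form_diff_tendsto_zero:
  assumes "\<And>n. a n \<in> fdom t" "\<And>n. b n \<in> fdom t" "\<And>n. a' n \<in> fdom t" "\<And>n. b' n \<in> fdom t"
    and "a \<longlonglongrightarrow> u" "a' \<longlonglongrightarrow> u" "b \<longlonglongrightarrow> v" "b' \<longlonglongrightarrow> v"
  shows "(\<lambda>n. fval t (a n) (b n) - fval t (a' n) (b' n)) \<longlonglongrightarrow> 0"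
proof (rule Lim_null_comparison)
  show "\<forall>\<^sub>F n in sequentially. norm (fval t (a n) (b n) - fval t (a' n) (b' n))
     \<le> 4 * M * (norm (a n - a' n) * norm (b n) + norm (a' n) * norm (b n - b' n))"
    using assms(1-4) by (simp add: form_cmod_diff_le)
  have "(\<lambda>n. 4 * M * (norm (a n - a' n) * norm (b n) + norm (a' n) * norm (b n - b' n)))
     \<longlonglongrightarrow> 4 * M * (norm (u - u) * norm v + norm u * norm (v - v))"
    using assms(5-8) by (intro tendsto_intros)
  then show "(\<lambda>n. 4 * M * (norm (a n - a' n) * norm (b n) + norm (a' n) * norm (b n - b' n))) \<longlonglongrightarrow> 0"
    by simp
qed

lemma form_tendsto:
  assumes "\<And>n. a n \<in> fdom t" "\<And>n. b n \<in> fdom t" "u \<in> fdom t" "v \<in> fdom t"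
    and "a \<longlonglongrightarrow> u" "b \<longlonglongrightarrow> v"
  shows "(\<lambda>n. fval t (a n) (b n)) \<longlonglongrightarrow> fval t u v"
  using form_diff_tendsto_zero[of a b "\<lambda>_. u" "\<lambda>_. v"] assms by (simp add: LIM_zero_iff)

lemma form_Cauchy:
  assumes "\<And>n. a n \<in> fdom t" "\<And>n. b n \<in> fdom t" "Cauchy a" "Cauchy b"
  shows "Cauchy (\<lambda>n. fval t (a n) (b n))"
proof (rule CauchyI)
  fix e :: real
  assume e: "e > 0"
  obtain Ka where Ka: "Ka > 0" "\<And>n. norm (a n) \<le> Ka"
    using Cauchy_Bseq[OF assms(3)] by (auto elim: BseqE)
  obtain Kb where Kb: "Kb > 0" "\<And>n. norm (b n) \<le> Kb"
    using Cauchy_Bseq[OF assms(4)] by (auto elim: BseqE)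
  define K where "K = Ka + Kb"
  have K: "K > 0" "\<And>n. norm (a n) \<le> K" "\<And>n. norm (b n) \<le> K"
    using Ka Kb unfolding K_def by (smt (verit))+
  define d where "d = e / (8 * (M + 1) * K)"
  have d: "d > 0"
    using e K M(1) by (simp add: d_def)
  obtain Na where Na: "\<And>m n. m \<ge> Na \<Longrightarrow> n \<ge> Na \<Longrightarrow> norm (a m - a n) < d"
    using CauchyD[OF assms(3) d] by blast
  obtain Nb where Nb: "\<And>m n. m \<ge> Nb \<Longrightarrow> n \<ge> Nb \<Longrightarrow> norm (b m - b n) < d"
    using CauchyD[OF assms(4) d] by blast
  show "\<exists>N. \<forall>m\<ge>N. \<forall>n\<ge>N. norm (fval t (a m) (b m) - fval t (a n) (b n)) < e"
  proof (intro exI[of _ "max Na Nb"] allI impI)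
    fix m n
    assume mn: "m \<ge> max Na Nb" "n \<ge> max Na Nb"
    have "norm (fval t (a m) (b m) - fval t (a n) (b n))
        \<le> 4 * M * (norm (a m - a n) * norm (b m) + norm (a n) * norm (b m - b n))"
      using assms(1,2) by (simp add: form_cmod_diff_le)
    also have "\<dots> \<le> 4 * M * (d * K + K * d)"
      using Na[of m n] Nb[of m n] mn K M(1) d
      by (intro mult_left_mono add_mono mult_mono) auto
    also have "\<dots> = e * (M / (M + 1))"
      using K(1) M(1) by (simp add: d_def divide_simps)
    also have "\<dots> < e"
      using e M(1) by (simp add: divide_simps)
    finally show "norm (fval t (a m) (b m) - fval t (a n) (b n)) < e" .
  qed
qed

lemma form_limit_along_sequences:
  obtains F where "\<And>a b u v. (\<And>n. a n \<in> fdom t) \<Longrightarrow> (\<And>n. b n \<in> fdom t) \<Longrightarrow>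
    a \<longlonglongrightarrow> u \<Longrightarrow> b \<longlonglongrightarrow> v \<Longrightarrow> (\<lambda>n. fval t (a n) (b n)) \<longlonglongrightarrow> F u v"
proof -
  have "\<forall>u. \<exists>a. (\<forall>n. a n \<in> fdom t) \<and> a \<longlonglongrightarrow> u"
    using form_dense[OF t(1)] closure_sequential by blast
  then obtain S where S: "\<And>u n. S u n \<in> fdom t" "\<And>u. S u \<longlonglongrightarrow> u"
    by metis
  define F where "F u v = lim (\<lambda>n. fval t (S u n) (S v n))" for u v
  have "(\<lambda>n. fval t (a n) (b n)) \<longlonglongrightarrow> F u v"
    if ab: "\<And>n. a n \<in> fdom t" "\<And>n. b n \<in> fdom t" "a \<longlonglongrightarrow> u" "b \<longlonglongrightarrow> v" for a b u v
  proof -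
    have "convergent (\<lambda>n. fval t (S u n) (S v n))"
      using form_Cauchy[OF S(1) S(1) LIMSEQ_imp_Cauchy[OF S(2)] LIMSEQ_imp_Cauchy[OF S(2)]]
      by (simp add: Cauchy_convergent_iff)
    then have "(\<lambda>n. fval t (S u n) (S v n)) \<longlonglongrightarrow> F u v"
      by (simp add: F_def convergent_LIMSEQ_iff)
    moreover have "(\<lambda>n. fval t (a n) (b n) - fval t (S u n) (S v n)) \<longlonglongrightarrow> 0"
      using ab S by (intro form_diff_tendsto_zero)
    ultimately show ?thesis
      using tendsto_add by fastforce
  qed
  then show ?thesis
    using that by blast
qed

lemma bounded_form_extension:
  obtains T where "fdom T = UNIV" "is_form T" "form_positive T"
    "\<forall>w. Re (fval T w w) \<le> M * (norm w)\<^sup>2"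
    "\<And>u v. u \<in> fdom t \<Longrightarrow> v \<in> fdom t \<Longrightarrow> fval T u v = fval t u v"
proof -
  obtain F where F: "\<And>a b u v. (\<And>n. a n \<in> fdom t) \<Longrightarrow> (\<And>n. b n \<in> fdom t) \<Longrightarrow>
      a \<longlonglongrightarrow> u \<Longrightarrow> b \<longlonglongrightarrow> v \<Longrightarrow> (\<lambda>n. fval t (a n) (b n)) \<longlonglongrightarrow> F u v"
    using form_limit_along_sequences by blast
  have "\<forall>u. \<exists>a. (\<forall>n. a n \<in> fdom t) \<and> a \<longlonglongrightarrow> u"
    using form_dense[OF t(1)] closure_sequential by blast
  then obtain S where S: "\<And>u n. S u n \<in> fdom t" "\<And>u. S u \<longlonglongrightarrow> u"
    by metis
  have F_eq: "F u v = l"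
    if "\<And>n. fval t (a n) (b n) = P n" "P \<longlonglongrightarrow> l"
      "\<And>n. a n \<in> fdom t" "\<And>n. b n \<in> fdom t" "a \<longlonglongrightarrow> u" "b \<longlonglongrightarrow> v" for a b P l u v
    using F[of a b u v] that LIMSEQ_unique by auto
  have F_S: "(\<lambda>n. fval t (S u n) (S v n)) \<longlonglongrightarrow> F u v" for u v
    by (intro F S)
  have "is_form (form_of UNIV F)"
  proof (rule is_form_form_of)
    show "F (x + x') y = F x y + F x' y" for x x' y
      by (rule F_eq[where a="\<lambda>n. S x n + S x' n" and b="S y"])
        (use S in \<open>auto simp: form_add_left t(1) form_dom_add intro: tendsto_add F_S\<close>)
    show "F (c *\<^sub>C x) y = c * F x y" for c x y
      by (rule F_eq[where a="\<lambda>n. c *\<^sub>C S x n" and b="S y"])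
        (use S in \<open>auto simp: form_scaleC_left t(1) form_dom_scaleC intro: tendsto_mult tendsto_scaleC F_S\<close>)
    show "F x (y + y') = F x y + F x y'" for x y y'
      by (rule F_eq[where a="S x" and b="\<lambda>n. S y n + S y' n"])
        (use S in \<open>auto simp: form_add_right t(1) form_dom_add intro: tendsto_add F_S\<close>)
    show "F x (c *\<^sub>C y) = cnj c * F x y" for c x y
      by (rule F_eq[where a="S x" and b="\<lambda>n. c *\<^sub>C S y n"])
        (use S in \<open>auto simp: form_scaleC_right t(1) form_dom_scaleC intro: tendsto_mult tendsto_scaleC F_S\<close>)
  qed (auto simp: csubspace_def)
  moreover have "form_positive (form_of UNIV F)"
    unfolding form_positive_def
  proof (intro ballI conjI)
    fix w
    have "(\<lambda>n. Im (fval t (S w n) (S w n))) \<longlonglongrightarrow> Im (F w w)"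
      by (intro tendsto_Im F_S)
    moreover have "Im (fval t (S w n) (S w n)) = 0" for n
      using t(2) S(1) by (simp add: form_positive_def)
    ultimately show "Im (fval (form_of UNIV F) w w) = 0"
      by (simp add: fval_form_of LIMSEQ_const_iff)
    have "(\<lambda>n. Re (fval t (S w n) (S w n))) \<longlonglongrightarrow> Re (F w w)"
      by (intro tendsto_Re F_S)
    then show "0 \<le> Re (fval (form_of UNIV F) w w)"
      by (simp add: fval_form_of) (rule LIMSEQ_le_const, use form_positive_real(3)[OF t(2) S(1)] in auto)
  qed
  moreover have "Re (fval (form_of UNIV F) w w) \<le> M * (norm w)\<^sup>2" for w
    unfolding fval_form_of
  proof (simp, rule LIMSEQ_le)
    show "(\<lambda>n. Re (fval t (S w n) (S w n))) \<longlonglongrightarrow> Re (F w w)"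
      by (intro tendsto_Re F_S)
    show "(\<lambda>n. M * (norm (S w n))\<^sup>2) \<longlonglongrightarrow> M * (norm w)\<^sup>2"
      using S by (intro tendsto_intros)
    show "\<exists>N. \<forall>n\<ge>N. Re (fval t (S w n) (S w n)) \<le> M * (norm (S w n))\<^sup>2"
      using M(2) S by auto
  qed
  moreover have "F u v = fval t u v" if "u \<in> fdom t" "v \<in> fdom t" for u v
    using that by (intro F_eq[where a="\<lambda>_. u" and b="\<lambda>_. v"]) auto
  ultimately show ?thesis
    using that[of "form_of UNIV F"] by (simp add: fval_form_of)
qed

end

section \<open>The order of Vf\<close>

lemma VfD:
  assumes "t \<in> Vf"
  shows Vf_is_form: "is_form t"
    and Vf_form_positive: "form_positive t"
    and Vf_bounded_fdom: "form_bounded t \<Longrightarrow> fdom t = UNIV"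
  using assms unfolding Vf_def by auto

lemma positive_form_Vf_extension:
  assumes t: "is_form t" "form_positive t"
  obtains y where "y \<in> Vf" "fdom t \<subseteq> fdom y"
    "\<And>u v. u \<in> fdom t \<Longrightarrow> v \<in> fdom t \<Longrightarrow> fval y u v = fval t u v"
    "form_bounded y \<longleftrightarrow> form_bounded t" "\<not> form_bounded t \<Longrightarrow> y = t"
proof (cases "form_bounded t")
  case True
  then obtain M where M: "M \<ge> 0" "\<forall>w\<in>fdom t. Re (fval t w w) \<le> M * (norm w)\<^sup>2"
    using form_bounded_iff[OF t(1)] by blast
  obtain T where T: "fdom T = UNIV" "is_form T" "form_positive T"
    "\<forall>w. Re (fval T w w) \<le> M * (norm w)\<^sup>2"
    "\<And>u v. u \<in> fdom t \<Longrightarrow> v \<in> fdom t \<Longrightarrow> fval T u v = fval t u v"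
    using bounded_form_extension[OF t M] by blast
  have "form_bounded T"
    using T(2,4) M(1) form_bounded_iff by blast
  then show ?thesis
    using that[of T] T True by (simp add: Vf_def)
next
  case False
  then show ?thesis
    using that[of t] t by (simp add: Vf_def)
qed

definition form_minus :: "'a form \<Rightarrow> 'a form \<Rightarrow> 'a form" where
  "form_minus s t = form_of (fdom s) (\<lambda>x y. fval s x y - fval t x y)"

lemma fdom_form_minus [simp]: "fdom (form_minus s t) = fdom s"
  by (simp add: form_minus_def)

lemma fval_form_minus:
  "x \<in> fdom s \<Longrightarrow> y \<in> fdom s \<Longrightarrow> fval (form_minus s t) x y = fval s x y - fval t x y"
  by (simp add: form_minus_def fval_form_of)

lemma is_form_form_minus:
  assumes s: "is_form s" and t: "is_form t" and dom: "fdom s \<subseteq> fdom t"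
  shows "is_form (form_minus s t)"
  unfolding form_minus_def
proof (rule is_form_form_of)
  show "csubspace (fdom s)" "closure (fdom s) = UNIV"
    using s unfolding is_form_def by blast+
  fix c x x' y y'
  assume "x \<in> fdom s" "x' \<in> fdom s" "y \<in> fdom s" "y' \<in> fdom s"
  moreover from this have "x \<in> fdom t" "x' \<in> fdom t" "y \<in> fdom t" "y' \<in> fdom t"
    using dom by blast+
  ultimately show "fval s (x + x') y - fval t (x + x') y = fval s x y - fval t x y + (fval s x' y - fval t x' y)"
    and "fval s (c *\<^sub>C x) y - fval t (c *\<^sub>C x) y = c * (fval s x y - fval t x y)"
    and "fval s x (y + y') - fval t x (y + y') = fval s x y - fval t x y + (fval s x y' - fval t x y')"
    and "fval s x (c *\<^sub>C y) - fval t x (c *\<^sub>C y) = cnj c * (fval s x y - fval t x y)"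
    by (simp_all add: s t form_add_left form_add_right form_scaleC_left form_scaleC_right algebra_simps)
qed

lemma form_positive_form_minus:
  assumes "form_positive s" "form_positive t" "fdom s \<subseteq> fdom t"
    and "\<forall>x\<in>fdom s. Re (fval t x x) \<le> Re (fval s x x)"
  shows "form_positive (form_minus s t)"
  using assms unfolding form_positive_def by (auto simp: fval_form_minus)

lemma form_plus_form_minus_cong:
  assumes "is_form s" "fdom t \<inter> fdom r = fdom s"
    and "\<And>x y. x \<in> fdom s \<Longrightarrow> y \<in> fdom s \<Longrightarrow> fval r x y = fval (form_minus s t) x y"
  shows "form_plus t r = s"
proof -
  have "form_plus t r = form_of (fdom s) (fval s)"
    unfolding form_plus_form_of assms(2) using assms(3) by (intro form_of_cong) (simp add: fval_form_minus)
  then show ?thesis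
    by (simp add: form_of_fval[OF assms(1)])
qed

lemma form_bounded_form_plus:
  assumes "is_form t" "is_form r" "form_bounded t" "form_bounded r"
  shows "form_bounded (form_plus t r)"
proof -
  obtain Mt Mr where "Mt \<ge> 0" "\<forall>w\<in>fdom t. Re (fval t w w) \<le> Mt * (norm w)\<^sup>2"
    and "Mr \<ge> 0" "\<forall>w\<in>fdom r. Re (fval r w w) \<le> Mr * (norm w)\<^sup>2"
    using assms form_bounded_iff by metis
  then have "\<forall>w\<in>fdom (form_plus t r). Re (fval (form_plus t r) w w) \<le> (Mt + Mr) * (norm w)\<^sup>2"
    by (force simp: form_plus_form_of fval_form_of algebra_simps intro: add_mono)
  then show ?thesis
    unfolding form_bounded_def bdd_above_def by force
qed

lemma Vf_leD:
  assumes t: "t \<in> Vf" and s: "s \<in> Vf" and "Vf_le t s"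
  shows "fdom s \<subseteq> fdom t \<and> (fdom s = fdom t \<or> form_bounded t) \<and>
    (\<forall>x\<in>fdom s. Re (fval t x x) \<le> Re (fval s x x))"
    (is "?dom \<and> ?eq_or_bdd \<and> ?le")
proof -
  obtain r where r: "r \<in> Vf" "oplus_defined t r" "form_plus t r = s"
    using assms(3) unfolding Vf_le_def by blast
  have dom_s: "fdom s = fdom t \<inter> fdom r"
    unfolding r(3)[symmetric] by (simp add: form_plus_form_of)
  have "fval s x x = fval t x x + fval r x x" if "x \<in> fdom s" for x
    using that unfolding dom_s r(3)[symmetric] by (simp add: form_plus_form_of fval_form_of)
  moreover have "0 \<le> Re (fval r x x)" if "x \<in> fdom s" for x
    using that dom_s form_positive_real(3)[OF Vf_form_positive[OF r(1)]] by blast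
  moreover have ?eq_or_bdd
    using r(2) Vf_bounded_fdom[OF r(1)] dom_s unfolding oplus_defined_def by auto
  ultimately show "?dom \<and> ?eq_or_bdd \<and> ?le"
    using dom_s by simp
qed

text \<open>If \<open>t\<close> were bounded with \<open>fdom s \<noteq> fdom t\<close>, then \<open>s = t + (s - t)\<close> would be
  bounded as well, forcing \<open>fdom s = UNIV\<close>.\<close>
lemma Vf_fdom_eq_if_bounded_minus:
  assumes t: "t \<in> Vf" and s: "s \<in> Vf" and dom: "fdom s \<subseteq> fdom t"
    and "fdom s = fdom t \<or> form_bounded t" and "form_bounded (form_minus s t)"
  shows "fdom s = fdom t"
proof (rule ccontr)
  assume "fdom s \<noteq> fdom t"
  then have "form_bounded t"
    using assms(4) by blast
  then have "form_bounded (form_plus t (form_minus s t))"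
    using assms(5) dom by (intro form_bounded_form_plus is_form_form_minus Vf_is_form t s)
  then have "form_bounded s"
    using form_plus_form_minus_cong[OF Vf_is_form[OF s]] dom by (simp add: Int_absorb1)
  then show False
    using Vf_bounded_fdom[OF s] dom \<open>fdom s \<noteq> fdom t\<close> by auto
qed

lemma Vf_leI:
  assumes t: "t \<in> Vf" and s: "s \<in> Vf" and "fdom s \<subseteq> fdom t \<and> (fdom s = fdom t \<or> form_bounded t) \<and>
    (\<forall>x\<in>fdom s. Re (fval t x x) \<le> Re (fval s x x))"
    (is "?dom \<and> ?eq_or_bdd \<and> ?le")
  shows "Vf_le t s"
proof -
  from assms(3) have dom: ?dom and eq_or_bdd: ?eq_or_bdd and le: ?le
    by auto
  note t_form = Vf_is_form[OF t] and s_form = Vf_is_form[OF s]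
  have d: "is_form (form_minus s t)" "form_positive (form_minus s t)"
    using is_form_form_minus[OF s_form t_form dom]
      form_positive_form_minus[OF Vf_form_positive[OF s] Vf_form_positive[OF t] dom le] .
  obtain r where r: "r \<in> Vf" "fdom s \<subseteq> fdom r"
    "\<And>u v. u \<in> fdom s \<Longrightarrow> v \<in> fdom s \<Longrightarrow> fval r u v = fval (form_minus s t) u v"
    "form_bounded r \<longleftrightarrow> form_bounded (form_minus s t)" "\<not> form_bounded (form_minus s t) \<Longrightarrow> r = form_minus s t"
    by (rule positive_form_Vf_extension[OF d]) simp
  have "fdom t \<inter> fdom r = fdom s \<and> oplus_defined t r"
  proof (cases "form_bounded r")
    case True
    then have "fdom s = fdom t"
      using Vf_fdom_eq_if_bounded_minus[OF t s dom eq_or_bdd] r(4) by blast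
    then show ?thesis
      using Vf_bounded_fdom[OF r(1) True] True by (simp add: oplus_defined_def)
  next
    case False
    then have "r = form_minus s t"
      using r(4,5) by blast
    then show ?thesis
      using dom eq_or_bdd by (auto simp: oplus_defined_def)
  qed
  moreover from this have "form_plus t r = s"
    using form_plus_form_minus_cong[OF s_form _ r(3)] by blast
  ultimately show "Vf_le t s"
    using r(1) unfolding Vf_le_def by blast
qed

lemma Vf_le_iff:
  assumes "t \<in> Vf" "s \<in> Vf"
  shows "Vf_le t s \<longleftrightarrow> fdom s \<subseteq> fdom t \<and> (fdom s = fdom t \<or> form_bounded t) \<and>
    (\<forall>x\<in>fdom s. Re (fval t x x) \<le> Re (fval s x x))"
  using Vf_leD[OF assms] Vf_leI[OF assms] by blast

lemma form_bounded_quad_le: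
  assumes "form_bounded t" "fdom s \<subseteq> fdom t" "\<forall>x\<in>fdom s. Re (fval s x x) \<le> Re (fval t x x)"
  shows "form_bounded s"
proof -
  obtain B where B: "\<And>x. x \<in> fdom t \<Longrightarrow> norm x = 1 \<Longrightarrow> Re (fval t x x) \<le> B"
    using assms(1) unfolding form_bounded_def bdd_above_def by blast
  have "Re (fval s x x) \<le> B" if "x \<in> fdom s" "norm x = 1" for x
    using B[of x] assms(2,3) that by fastforce
  then show ?thesis
    unfolding form_bounded_def bdd_above_def by blast
qed

lemma form_quad_le_on_dense:
  assumes s: "s \<in> Vf" "form_bounded s" and t: "t \<in> Vf" "form_bounded t"
    and "closure D = UNIV" "\<forall>v\<in>D. Re (fval s v v) \<le> Re (fval t v v)"
  shows "Re (fval s v v) \<le> Re (fval t v v)"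
proof -
  obtain a where a: "\<And>n. a n \<in> D" "a \<longlonglongrightarrow> v"
    using closure_sequential[of v D] assms(5) by auto
  have quad_tendsto: "(\<lambda>n. Re (fval r (a n) (a n))) \<longlonglongrightarrow> Re (fval r v v)"
    if r: "r \<in> Vf" "form_bounded r" for r
  proof -
    obtain M where "M \<ge> 0" "\<forall>w\<in>fdom r. Re (fval r w w) \<le> M * (norm w)\<^sup>2"
      using form_bounded_iff[OF Vf_is_form[OF r(1)]] r(2) by blast
    then show ?thesis
      using Vf_bounded_fdom[OF r] a(2)
      by (intro tendsto_Re form_tendsto[OF Vf_is_form[OF r(1)] Vf_form_positive[OF r(1)]]) auto
  qed
  show ?thesis
    by (rule LIMSEQ_le[OF quad_tendsto[OF s] quad_tendsto[OF t]]) (use a(1) assms(6) in auto)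
qed

section \<open>Pointwise limits of forms\<close>

lemma polarization_convergent:
  assumes "\<And>k. is_form (X k)" "\<And>k. a \<in> fdom (X k)" "\<And>k. b \<in> fdom (X k)"
    and "\<And>c. convergent (\<lambda>k. fval (X k) (a + c *\<^sub>C b) (a + c *\<^sub>C b))"
  shows "convergent (\<lambda>k. fval (X k) a b)"
proof -
  obtain l where l: "\<And>c. (\<lambda>k. fval (X k) (a + c *\<^sub>C b) (a + c *\<^sub>C b)) \<longlonglongrightarrow> l c"
    using assms(4) unfolding convergent_def by (metis choice)
  have polar: "fval (X k) a b = (fval (X k) (a + 1 *\<^sub>C b) (a + 1 *\<^sub>C b)
      - fval (X k) (a + (-1) *\<^sub>C b) (a + (-1) *\<^sub>C b) + \<i> * fval (X k) (a + \<i> *\<^sub>C b) (a + \<i> *\<^sub>C b)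
      - \<i> * fval (X k) (a + (-\<i>) *\<^sub>C b) (a + (-\<i>) *\<^sub>C b)) / 4" for k
    using form_polarization[OF assms(1-3)[of k]] by (simp add: field_simps)
  have "(\<lambda>k. fval (X k) a b) \<longlonglongrightarrow> (l 1 - l (-1) + \<i> * l \<i> - \<i> * l (-\<i>)) / 4"
    unfolding polar by (intro tendsto_intros l) simp
  then show ?thesis
    unfolding convergent_def by blast
qed

context
  fixes X :: "nat \<Rightarrow> 'a::complex_inner form" and D :: "'a set" and L
  assumes X: "\<And>n. is_form (X n)" "\<And>n. D \<subseteq> fdom (X n)"
    and D: "csubspace D" "closure D = UNIV"
    and L: "\<And>u v. u \<in> D \<Longrightarrow> v \<in> D \<Longrightarrow> (\<lambda>n. fval (X n) u v) \<longlonglongrightarrow> L u v"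
begin

lemma pointwise_limit_is_form: "is_form (form_of D L)"
proof -
  have D_closed: "u + v \<in> D" "c *\<^sub>C u \<in> D" if "u \<in> D" "v \<in> D" for u v c
    using D(1) that unfolding csubspace_def by auto
  have L_eq: "L u v = l" if "\<And>n. fval (X n) u v = P n" "P \<longlonglongrightarrow> l" "u \<in> D" "v \<in> D" for u v P l
    using L[of u v] that LIMSEQ_unique by auto
  have sub: "u \<in> fdom (X n)" if "u \<in> D" for u n
    using X(2) that by blast
  show ?thesis
  proof (rule is_form_form_of[OF D])
    show "L (u + u') v = L u v + L u' v" if "u \<in> D" "u' \<in> D" "v \<in> D" for u u' v
      using that D_closed sub by (intro L_eq[OF form_add_left[OF X(1)]] tendsto_add L)
    show "L (c *\<^sub>C u) v = c * L u v" if "u \<in> D" "v \<in> D" for c u v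
      using that D_closed sub by (intro L_eq[OF form_scaleC_left[OF X(1)]] tendsto_mult_left L)
    show "L u (v + v') = L u v + L u v'" if "u \<in> D" "v \<in> D" "v' \<in> D" for u v v'
      using that D_closed sub by (intro L_eq[OF form_add_right[OF X(1)]] tendsto_add L)
    show "L u (c *\<^sub>C v) = cnj c * L u v" if "u \<in> D" "v \<in> D" for c u v
      using that D_closed sub by (intro L_eq[OF form_scaleC_right[OF X(1)]] tendsto_mult_left L)
  qed
qed

lemma pointwise_limit_positive:
  assumes "\<And>n. form_positive (X n)"
  shows "form_positive (form_of D L)"
  unfolding form_positive_def
proof (intro ballI conjI)
  fix w
  assume "w \<in> fdom (form_of D L)"
  then have w: "w \<in> D"
    by simp
  then have w': "w \<in> fdom (X n)" for n
    using X(2) by auto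
  have "(\<lambda>n. Im (fval (X n) w w)) \<longlonglongrightarrow> Im (L w w)"
    using w by (intro tendsto_Im L)
  moreover have "Im (fval (X n) w w) = 0" for n
    using assms w' unfolding form_positive_def by blast
  ultimately have "Im (L w w) = 0"
    by (simp add: LIMSEQ_const_iff)
  then show "Im (fval (form_of D L) w w) = 0"
    using w by (simp add: fval_form_of)
  have "(\<lambda>n. Re (fval (X n) w w)) \<longlonglongrightarrow> Re (L w w)"
    using w by (intro tendsto_Re L)
  then have "0 \<le> Re (L w w)"
    by (rule LIMSEQ_le_const) (use form_positive_real(3)[OF assms w'] in blast)
  then show "0 \<le> Re (fval (form_of D L) w w)"
    using w by (simp add: fval_form_of)
qed

end

section \<open>Decreasing sequences in Vf\<close>

locale decreasing_Vf_sequence =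
  fixes x :: "nat \<Rightarrow> 'a::complex_inner form"
  assumes in_Vf: "\<And>n. x n \<in> Vf"
    and decreasing: "\<And>n. Vf_le (x (Suc n)) (x n)"
begin

lemma decreasing_step:
  "fdom (x n) \<subseteq> fdom (x (Suc n)) \<and> (fdom (x n) = fdom (x (Suc n)) \<or> form_bounded (x (Suc n))) \<and>
    (\<forall>v\<in>fdom (x n). Re (fval (x (Suc n)) v v) \<le> Re (fval (x n) v v))"
  using decreasing[of n] unfolding Vf_le_iff[OF in_Vf in_Vf] .

lemma fdom_mono: "n \<le> m \<Longrightarrow> fdom (x n) \<subseteq> fdom (x m)"
  by (rule lift_Suc_mono_le[of "\<lambda>n. fdom (x n)"]) (use decreasing_step in blast)

lemma quad_antimono:
  assumes "n \<le> m" "v \<in> fdom (x n)"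
  shows "Re (fval (x m) v v) \<le> Re (fval (x n) v v)"
  using assms(1)
proof (induction m rule: dec_induct)
  case (step k)
  have "v \<in> fdom (x k)"
    using fdom_mono[OF step.hyps(1)] assms(2) by blast
  then have "Re (fval (x (Suc k)) v v) \<le> Re (fval (x k) v v)"
    using decreasing_step[of k] by blast
  then show ?case
    using step.IH by linarith
qed simp

definition limit_dom :: "'a set" where
  "limit_dom = (\<Union>n. fdom (x n))"

lemma fdom_subset_limit_dom: "fdom (x n) \<subseteq> limit_dom"
  unfolding limit_dom_def by blast

text \<open>The domains can only grow at a step whose form is bounded, and then they
  are the whole space.\<close>
lemma fdom_eq_limit_dom_if_unbounded:
  assumes "\<forall>m. \<not> form_bounded (x m)"
  shows "fdom (x n) = limit_dom"
proof -
  have const: "fdom (x m) = fdom (x 0)" for m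
  proof (induction m)
    case (Suc m)
    then show ?case
      using decreasing_step[of m] assms by simp
  qed simp
  then have "fdom (x m) = fdom (x n)" for m
    by (metis const)
  then show ?thesis
    unfolding limit_dom_def by blast
qed

lemma limit_dom_eventually:
  obtains N where "\<And>n. N \<le> n \<Longrightarrow> fdom (x n) = limit_dom"
proof (cases "\<exists>N. form_bounded (x N)")
  case True
  then obtain N where "form_bounded (x N)"
    by blast
  then have "fdom (x N) = UNIV"
    using Vf_bounded_fdom[OF in_Vf] by blast
  then have "fdom (x n) = UNIV" "limit_dom = UNIV" if "N \<le> n" for n
    using fdom_mono[OF that] fdom_subset_limit_dom[of N] by auto
  then show ?thesis
    using that[of N] by simp
next
  case False
  then show ?thesis
    using that[of 0] fdom_eq_limit_dom_if_unbounded by blast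
qed

lemma limit_dom_subspace: "csubspace limit_dom" "closure limit_dom = UNIV"
proof -
  obtain N where "\<And>n. N \<le> n \<Longrightarrow> fdom (x n) = limit_dom"
    using limit_dom_eventually by blast
  then have N: "fdom (x N) = limit_dom"
    by simp
  have "is_form (x N)"
    by (rule Vf_is_form[OF in_Vf])
  then show "csubspace limit_dom" "closure limit_dom = UNIV"
    unfolding N[symmetric] is_form_def by blast+
qed

definition limit_form :: "'a form" where
  "limit_form = form_of limit_dom (\<lambda>u v. lim (\<lambda>n. fval (x n) u v))"

lemma fdom_limit_form [simp]: "fdom limit_form = limit_dom"
  by (simp add: limit_form_def)

text \<open>Once the domains are stable the diagonal values decrease and are nonnegative,
  so they converge; polarization then gives convergence off the diagonal.\<close>
lemma limit_form_tendsto: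
  assumes "u \<in> limit_dom" "v \<in> limit_dom"
  shows "(\<lambda>n. fval (x n) u v) \<longlonglongrightarrow> fval limit_form u v"
proof -
  obtain N where N: "\<And>n. N \<le> n \<Longrightarrow> fdom (x n) = limit_dom"
    using limit_dom_eventually by blast
  have dom: "w \<in> fdom (x (k + N))" if "w \<in> limit_dom" for w k
    using N[of "k + N"] that by simp
  have diag: "convergent (\<lambda>k. fval (x (k + N)) w w)" if w: "w \<in> limit_dom" for w
  proof -
    define q where "q k = Re (fval (x (k + N)) w w)" for k
    have "q (Suc k) \<le> q k" for k
      using decreasing_step[of "k + N"] dom[OF w, of k] by (simp add: q_def)
    then have "decseq q"
      by (simp add: decseq_Suc_iff)
    moreover have "\<forall>k. 0 \<le> q k"
      unfolding q_def using form_positive_real(3)[OF Vf_form_positive[OF in_Vf] dom[OF w]] by blast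
    ultimately obtain l where "q \<longlonglongrightarrow> l"
      using decseq_convergent[of q 0] by blast
    then have "(\<lambda>k. complex_of_real (q k)) \<longlonglongrightarrow> complex_of_real l"
      by (rule tendsto_of_real)
    moreover have "complex_of_real (q k) = fval (x (k + N)) w w" for k
      unfolding q_def by (rule form_positive_real(1)[OF Vf_form_positive[OF in_Vf] dom[OF w]])
    ultimately show ?thesis
      unfolding convergent_def by auto
  qed
  have "u + c *\<^sub>C v \<in> limit_dom" for c
    using limit_dom_subspace(1) assms unfolding csubspace_def by blast
  then have "convergent (\<lambda>k. fval (x (k + N)) u v)"
    by (intro polarization_convergent[OF Vf_is_form[OF in_Vf] dom[OF assms(1)] dom[OF assms(2)]] diag)
  then have "convergent (\<lambda>n. fval (x n) u v)"
    using convergent_ignore_initial_segment[of "\<lambda>n. fval (x n) u v" N] by simp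
  then show ?thesis
    using assms by (simp add: convergent_LIMSEQ_iff limit_form_def fval_form_of)
qed

lemma limit_form_positive_form: "is_form limit_form" "form_positive limit_form"
proof -
  obtain N where N: "\<And>n. N \<le> n \<Longrightarrow> fdom (x n) = limit_dom"
    using limit_dom_eventually by blast
  have X: "is_form (x (k + N))" "limit_dom \<subseteq> fdom (x (k + N))" for k
    using Vf_is_form[OF in_Vf] N[of "k + N"] by simp_all
  have L: "(\<lambda>k. fval (x (k + N)) u v) \<longlonglongrightarrow> lim (\<lambda>n. fval (x n) u v)"
    if "u \<in> limit_dom" "v \<in> limit_dom" for u v
    using LIMSEQ_ignore_initial_segment[OF limit_form_tendsto[OF that]] that
    by (simp add: limit_form_def fval_form_of)
  show "is_form limit_form"
    unfolding limit_form_def by (rule pointwise_limit_is_form[OF X limit_dom_subspace L])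
  show "form_positive limit_form"
    unfolding limit_form_def
    by (rule pointwise_limit_positive[OF X limit_dom_subspace L Vf_form_positive[OF in_Vf]])
qed

lemma limit_form_le:
  assumes "v \<in> fdom (x n)"
  shows "Re (fval limit_form v v) \<le> Re (fval (x n) v v)"
proof (rule LIMSEQ_le_const2)
  show "(\<lambda>m. Re (fval (x m) v v)) \<longlonglongrightarrow> Re (fval limit_form v v)"
    using assms fdom_subset_limit_dom by (intro tendsto_Re limit_form_tendsto) auto
  show "\<exists>N. \<forall>m\<ge>N. Re (fval (x m) v v) \<le> Re (fval (x n) v v)"
    using quad_antimono[OF _ assms] by blast
qed

lemma limit_form_bounded:
  assumes "form_bounded (x n)"
  shows "form_bounded limit_form"
proof (rule form_bounded_quad_le[OF assms])
  show "fdom limit_form \<subseteq> fdom (x n)"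
    using Vf_bounded_fdom[OF in_Vf assms] by simp
  show "\<forall>v\<in>fdom limit_form. Re (fval limit_form v v) \<le> Re (fval (x n) v v)"
    using Vf_bounded_fdom[OF in_Vf assms] limit_form_le by blast
qed

lemma lower_bound_le_limit_form:
  assumes "z \<in> Vf" "\<And>n. Vf_le z (x n)" "v \<in> limit_dom"
  shows "Re (fval z v v) \<le> Re (fval limit_form v v)"
proof (rule LIMSEQ_le_const)
  show "(\<lambda>m. Re (fval (x m) v v)) \<longlonglongrightarrow> Re (fval limit_form v v)"
    using assms(3) by (intro tendsto_Re limit_form_tendsto)
  obtain N where N: "\<And>n. N \<le> n \<Longrightarrow> fdom (x n) = limit_dom"
    using limit_dom_eventually by blast
  show "\<exists>N. \<forall>m\<ge>N. Re (fval z v v) \<le> Re (fval (x m) v v)"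
  proof (intro exI[of _ N] allI impI)
    fix m
    assume "N \<le> m"
    then have "v \<in> fdom (x m)"
      using N assms(3) by simp
    then show "Re (fval z v v) \<le> Re (fval (x m) v v)"
      using assms(2)[of m] Vf_le_iff[OF assms(1) in_Vf] by blast
  qed
qed

context
  fixes y :: "'a form"
  assumes y: "y \<in> Vf" "limit_dom \<subseteq> fdom y"
    "\<And>u v. u \<in> limit_dom \<Longrightarrow> v \<in> limit_dom \<Longrightarrow> fval y u v = fval limit_form u v"
    "form_bounded y \<longleftrightarrow> form_bounded limit_form"
    "\<not> form_bounded limit_form \<Longrightarrow> y = limit_form"
begin

lemma extension_le: "Vf_le y (x n)"
proof -
  have "fdom (x n) = fdom y" if "\<not> form_bounded y"
  proof -
    have "\<forall>m. \<not> form_bounded (x m)"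
      using that y(4) limit_form_bounded by blast
    then show ?thesis
      using fdom_eq_limit_dom_if_unbounded y(4,5) that by (simp add: limit_form_def)
  qed
  moreover have "Re (fval y v v) \<le> Re (fval (x n) v v)" if v: "v \<in> fdom (x n)" for v
  proof -
    have "v \<in> limit_dom"
      using v fdom_subset_limit_dom by blast
    then show ?thesis
      using y(3) limit_form_le[OF v] by simp
  qed
  ultimately show ?thesis
    unfolding Vf_le_iff[OF y(1) in_Vf] using y(2) fdom_subset_limit_dom by blast
qed

lemma le_extension:
  assumes z: "z \<in> Vf" "\<And>n. Vf_le z (x n)"
  shows "Vf_le z y"
proof -
  obtain N where "\<And>n. N \<le> n \<Longrightarrow> fdom (x n) = limit_dom"
    using limit_dom_eventually by blast
  then have "fdom (x N) = limit_dom"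
    by simp
  then have dom_z: "limit_dom \<subseteq> fdom z" "limit_dom = fdom z \<or> form_bounded z"
    using z(2)[of N] unfolding Vf_le_iff[OF z(1) in_Vf] by auto
  have z_le: "Re (fval z v v) \<le> Re (fval y v v)" if "v \<in> limit_dom" for v
    using lower_bound_le_limit_form[OF z that] y(3) that by simp
  show ?thesis
  proof (cases "form_bounded y")
    case True
    have "form_bounded z"
    proof (cases "limit_dom = fdom z")
      case True
      then show ?thesis
        using form_bounded_quad_le[OF \<open>form_bounded y\<close>, of z] y(2) z_le by auto
    next
      case False
      then show ?thesis
        using dom_z by blast
    qed
    then have "Re (fval z v v) \<le> Re (fval y v v)" for v
      using form_quad_le_on_dense z(1) y(1) True limit_dom_subspace(2) z_le by blast
    then show ?thesis
      unfolding Vf_le_iff[OF z(1) y(1)] using \<open>form_bounded z\<close> Vf_bounded_fdom[OF z(1)] by simp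
  next
    case False
    then have "fdom y = limit_dom"
      using y(4,5) by (simp add: limit_form_def)
    then show ?thesis
      unfolding Vf_le_iff[OF z(1) y(1)] using dom_z z_le by simp
  qed
qed

end

lemma has_infimum: "\<exists>y\<in>Vf. (\<forall>n. Vf_le y (x n)) \<and> (\<forall>z\<in>Vf. (\<forall>n. Vf_le z (x n)) \<longrightarrow> Vf_le z y)"
proof -
  obtain y where y: "y \<in> Vf" "fdom limit_form \<subseteq> fdom y"
    "\<And>u v. u \<in> fdom limit_form \<Longrightarrow> v \<in> fdom limit_form \<Longrightarrow> fval y u v = fval limit_form u v"
    "form_bounded y \<longleftrightarrow> form_bounded limit_form" "\<not> form_bounded limit_form \<Longrightarrow> y = limit_form"
    by (rule positive_form_Vf_extension[OF limit_form_positive_form]) blast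
  note y = y[unfolded fdom_limit_form]
  show ?thesis
    using y(1) extension_le[OF y] le_extension[OF y] by blast
qed

end

theorem theorem5p2:
  assumes "infinite_dimensional TYPE('a::chilbert_space)"
  shows "monotone_dedekind_down_sigma_complete (Vf :: 'a form set) Vf_le"
  unfolding monotone_dedekind_down_sigma_complete_def
proof (intro allI impI)
  fix x :: "nat \<Rightarrow> 'a form"
  assume "(\<forall>n. x n \<in> Vf) \<and> (\<forall>n. Vf_le (x (Suc n)) (x n))"
  then interpret decreasing_Vf_sequence x
    by unfold_locales auto
  show "\<exists>y\<in>Vf. (\<forall>n. Vf_le y (x n)) \<and> (\<forall>z\<in>Vf. (\<forall>n. Vf_le z (x n)) \<longrightarrow> Vf_le z y)"
    by (rule has_infimum)
qed

end
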